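(* Let $\tau>0$, $a>0$, let $s,d$ be integers with $1\le s\le d$ and let $\ell\in\mathcal L$. Then $$\inf_{\hat T}\sup_{P_\xi\in\mathcal G_{a,\tau}}\sup_{\sigma>0}\sup_{\theta\in\Theta_s}\mathbf E_{\theta,P_\xi,\sigma}\,\ell\Big(c\,\phi_{\rm exp}(s,d)^{-1}\Big|\frac{\hat T}{\sigma^2}-1\Big|\Big)\ge c',$$ where $\phi_{\rm exp}(s,d)=\max\big(\frac1{\sqrt d},\frac sd\log^{2/a}(\frac{ed}{s})\big)$ and $c,c'>0$ depend only on $\ell$, $a$ and $\tau$.
   Context: Model: $Y_i=\theta_i+\sigma\xi_i$, $i=1,\dots,d$, $\theta\in\mathbb R^d$, $\sigma>0$, $\xi_i$ i.i.d. with distribution $P_\xi$; $\mathbf E_{\theta,P_\xi,\sigma}$ expectation; $\Theta_s=\{\theta:\|\theta\|_0\le s\}$. $\mathcal G_{a,\tau}$: distributions with $\mathbf E\xi_1=0,\mathbf E\xi_1^2=1$, $\mathbf P(|\xi_1|>t)\le2e^{-(t/\tau)^a}$ for all $t\ge2$. $\mathcal L$: nondecreasing $\ell:[0,\infty)\to[0,\infty)$, $\ell(0)=0$, $\ell\not\equiv0$; $\inf_{\hat T}$ over all estimators. *)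

theory Defs
  imports "HOL-Probability.Probability"
begin

definition noise_class :: "real \<Rightarrow> real \<Rightarrow> real measure set" where
  "noise_class a \<tau> = {P. prob_space P \<and> sets P = sets borel \<and>
      integrable P (\<lambda>x. x) \<and> (\<integral>x. x \<partial>P) = 0 \<and>
      integrable P (\<lambda>x. x\<^sup>2) \<and> (\<integral>x. x\<^sup>2 \<partial>P) = 1 \<and>
      (\<forall>t\<ge>2. measure P {x. \<bar>x\<bar> > t} \<le> 2 * exp (- ((t / \<tau>) powr a)))}"

definition loss_class :: "(real \<Rightarrow> real) set" where
  "loss_class = {ell. mono_on {0..} ell \<and> (\<forall>x\<ge>0. ell x \<ge> 0) \<and> ell 0 = 0 \<and>
      (\<exists>x\<ge>0. ell x \<noteq> 0)}"

text \<open>s-sparse vectors in R^d, vectors represented as nat => real on indices {..<d}.\<close>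
definition sparse_vecs :: "nat \<Rightarrow> nat \<Rightarrow> (nat \<Rightarrow> real) set" where
  "sparse_vecs d s = {\<theta>. card {i\<in>{..<d}. \<theta> i \<noteq> 0} \<le> s}"

definition phi_exp :: "real \<Rightarrow> nat \<Rightarrow> nat \<Rightarrow> real" where
  "phi_exp a s d = max (1 / sqrt (real d))
      (real s / real d * (ln (exp 1 * real d / real s)) powr (2 / a))"

definition obs :: "nat \<Rightarrow> (nat \<Rightarrow> real) \<Rightarrow> real \<Rightarrow> (nat \<Rightarrow> real) \<Rightarrow> (nat \<Rightarrow> real)" where
  "obs d \<theta> \<sigma> \<xi> = restrict (\<lambda>i. \<theta> i + \<sigma> * \<xi> i) {..<d}"

definition risk :: "(real \<Rightarrow> real) \<Rightarrow> real \<Rightarrow> real \<Rightarrow> nat \<Rightarrow> nat \<Rightarrow>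
    ((nat \<Rightarrow> real) \<Rightarrow> real) \<Rightarrow> real measure \<Rightarrow> real \<Rightarrow> (nat \<Rightarrow> real) \<Rightarrow> ennreal" where
  "risk ell a c s d T P \<sigma> \<theta> =
     (\<integral>\<^sup>+ \<xi>. ennreal (ell (c / phi_exp a s d * \<bar>T (obs d \<theta> \<sigma> \<xi>) / \<sigma>\<^sup>2 - 1\<bar>))
        \<partial>(PiM {..<d} (\<lambda>_. P)))"

end

theory Submission
  imports Defs
begin

text \<open>
  Both terms of \<open>\<phi>\<^sub>e\<^sub>x\<^sub>p\<close> come from two-point arguments in which the
  estimator sees the same finite sample space under two hypotheses whose variances differ by
  a factor \<open>1 + g\<close>; whatever it outputs, its relative error is at least \<open>min g 1 / 4\<close>
  under one of them.

  Dense regime: take \<open>\<theta> = 0\<close> and let \<open>\<sigma>\<xi>\<^sub>i\<close> take the values \<open>\<plusminus>1\<close> with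
  probability \<open>p/2\<close> each and \<open>0\<close> otherwise, so that \<open>\<sigma>\<^sup>2 = p\<close>. For
  \<open>p = (1 + 1/\<surd>d)/2\<close> and \<open>p = 1/2\<close> the Hellinger affinity of the \<open>d\<close>-fold products
  stays bounded below, and Le Cam's inequality gives the rate \<open>1/\<surd>d\<close>.

  Sparse regime: under the null, \<open>\<theta> = 0\<close> and each noise coordinate is a Rademacher
  sign plus, with probability \<open>q = s/(2d)\<close>, a spike of height
  \<open>A \<approx> \<tau> log\<^sup>1\<^sup>/\<^sup>a(ed/s)\<close>; the tail condition of \<open>\<G>\<^sub>a\<^sub>,\<^sub>\<tau>\<close> permits exactly this height.
  The same observations arise by moving the spikes into \<open>\<theta>\<close> and keeping Rademacher
  noise of variance 1, and by Markov's inequality the spike pattern is \<open>s\<close>-sparse with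
  probability at least 1/2. The variance ratio \<open>1 + qA\<^sup>2\<close> is of order
  \<open>1 + (s/d) log\<^sup>2\<^sup>/\<^sup>a(ed/s)\<close>.
\<close>

section \<open>Finite noise laws and their risks\<close>

definition weighted_pmf :: "'b set \<Rightarrow> ('b \<Rightarrow> real) \<Rightarrow> 'b pmf" where
  "weighted_pmf S w = embed_pmf (\<lambda>x. if x \<in> S then w x else 0)"

definition finite_law :: "'b set \<Rightarrow> ('b \<Rightarrow> real) \<Rightarrow> ('b \<Rightarrow> real) \<Rightarrow> real measure" where
  "finite_law S w v = distr (measure_pmf (weighted_pmf S w)) borel v"

lemma sum_PiE_insert:
  assumes "finite I" and "i \<notin> I" and "finite S"
  shows "(\<Sum>u\<in>insert i I \<rightarrow>\<^sub>E S. H u) = (\<Sum>y\<in>S. \<Sum>u\<in>I \<rightarrow>\<^sub>E S. H (u(i := y)))"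
proof -
  have "(\<Sum>u\<in>insert i I \<rightarrow>\<^sub>E S. H u) = (\<Sum>(y, u)\<in>S \<times> (I \<rightarrow>\<^sub>E S). H (u(i := y)))"
    unfolding PiE_insert_eq using inj_combinator[OF assms(2)] by (subst sum.reindex) (auto simp: case_prod_unfold)
  also have "\<dots> = (\<Sum>y\<in>S. \<Sum>u\<in>I \<rightarrow>\<^sub>E S. H (u(i := y)))"
    by (rule sum.cartesian_product[symmetric])
  finally show ?thesis .
qed

lemma sum_prod_PiE_eq_1:
  fixes w :: "'b \<Rightarrow> real"
  assumes "finite I" and "finite S" and "sum w S = 1"
  shows "(\<Sum>u\<in>I \<rightarrow>\<^sub>E S. \<Prod>i\<in>I. w (u i)) = 1"
  using assms by (subst prod_sum_PiE[symmetric]) auto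

lemma sum_PiE_Times:
  fixes H :: "('i \<Rightarrow> 'a \<times> 'b) \<Rightarrow> 'c :: comm_monoid_add"
  shows "(\<Sum>u\<in>I \<rightarrow>\<^sub>E A \<times> B. H u) = (\<Sum>\<alpha>\<in>I \<rightarrow>\<^sub>E A. \<Sum>\<beta>\<in>I \<rightarrow>\<^sub>E B. H (restrict (\<lambda>i. (\<alpha> i, \<beta> i)) I))"
proof -
  have "(\<Sum>u\<in>I \<rightarrow>\<^sub>E A \<times> B. H u) = (\<Sum>(\<alpha>, \<beta>)\<in>(I \<rightarrow>\<^sub>E A) \<times> (I \<rightarrow>\<^sub>E B). H (restrict (\<lambda>i. (\<alpha> i, \<beta> i)) I))"
    by (rule sum.reindex_bij_witness[where i="\<lambda>(\<alpha>, \<beta>). restrict (\<lambda>i. (\<alpha> i, \<beta> i)) I"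
        and j="\<lambda>u. (restrict (\<lambda>i. fst (u i)) I, restrict (\<lambda>i. snd (u i)) I)"])
      (auto simp: PiE_iff extensional_def fun_eq_iff intro!: arg_cong[where f=H])
  also have "\<dots> = (\<Sum>\<alpha>\<in>I \<rightarrow>\<^sub>E A. \<Sum>\<beta>\<in>I \<rightarrow>\<^sub>E B. H (restrict (\<lambda>i. (\<alpha> i, \<beta> i)) I))"
    by (rule sum.cartesian_product[symmetric])
  finally show ?thesis .
qed

locale finite_weights =
  fixes S :: "'b set" and w :: "'b \<Rightarrow> real"
  assumes finite_support: "finite S" and weights_nonneg: "\<And>x. x \<in> S \<Longrightarrow> w x \<ge> 0"
    and weights_sum: "sum w S = 1"
begin

lemma pmf_weighted_pmf: "pmf (weighted_pmf S w) x = (if x \<in> S then w x else 0)"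
  unfolding weighted_pmf_def
proof (rule pmf_embed_pmf)
  show "\<And>x. 0 \<le> (if x \<in> S then w x else 0)" using weights_nonneg by auto
  have "(\<integral>\<^sup>+ x. ennreal (if x \<in> S then w x else 0) \<partial>count_space UNIV) = (\<Sum>x\<in>S. ennreal (w x))"
    by (subst nn_integral_count_space'[of S]) (auto simp: finite_support)
  also have "\<dots> = 1"
    using weights_nonneg weights_sum by (subst sum_ennreal) auto
  finally show "(\<integral>\<^sup>+ x. ennreal (if x \<in> S then w x else 0) \<partial>count_space UNIV) = 1" .
qed

lemma set_pmf_weighted_pmf: "set_pmf (weighted_pmf S w) \<subseteq> S"
  by (auto simp: set_pmf_eq pmf_weighted_pmf split: if_splits)

lemma sets_finite_law [simp, measurable_cong]: "sets (finite_law S w v) = sets borel"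
  by (simp add: finite_law_def)

lemma space_finite_law [simp]: "space (finite_law S w v) = UNIV"
  by (simp add: finite_law_def)

lemma prob_space_finite_law: "prob_space (finite_law S w v)"
  unfolding finite_law_def by (auto intro: prob_space.prob_space_distr measure_pmf.prob_space_axioms)

lemma nn_integral_finite_law:
  assumes "g \<in> borel_measurable borel"
  shows "(\<integral>\<^sup>+x. g x \<partial>finite_law S w v) = (\<Sum>y\<in>S. ennreal (w y) * g (v y))"
proof -
  have "(\<integral>\<^sup>+x. g x \<partial>finite_law S w v) = (\<integral>\<^sup>+x. g (v x) \<partial>measure_pmf (weighted_pmf S w))"
    unfolding finite_law_def using assms by (simp add: nn_integral_distr)
  also have "\<dots> = (\<Sum>y\<in>S. g (v y) * pmf (weighted_pmf S w) y)"
    using finite_support set_pmf_weighted_pmf by (intro nn_integral_measure_pmf_support) auto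
  finally show ?thesis
    by (simp add: pmf_weighted_pmf mult.commute)
qed

lemma integrable_finite_law: "integrable (finite_law S w v) g"
  if "g \<in> borel_measurable borel" for g :: "real \<Rightarrow> real"
  unfolding finite_law_def
  by (subst integrable_distr_eq)
    (auto simp: that intro!: integrable_measure_pmf_finite finite_subset[OF set_pmf_weighted_pmf finite_support])

lemma integral_finite_law: "(\<integral>x. g x \<partial>finite_law S w v) = (\<Sum>y\<in>S. w y * g (v y))"
  if "g \<in> borel_measurable borel" for g :: "real \<Rightarrow> real"
proof -
  have "(\<integral>x. g x \<partial>finite_law S w v) = (\<integral>x. g (v x) \<partial>measure_pmf (weighted_pmf S w))"
    unfolding finite_law_def using that by (simp add: integral_distr)
  also have "\<dots> = (\<Sum>y\<in>S. g (v y) * pmf (weighted_pmf S w) y)"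
    using finite_support set_pmf_weighted_pmf by (intro integral_measure_pmf_real) auto
  finally show ?thesis
    by (simp add: pmf_weighted_pmf mult.commute)
qed

lemma measure_finite_law: "measure (finite_law S w v) A = (\<Sum>y\<in>{y\<in>S. v y \<in> A}. w y)"
  if "A \<in> sets borel"
proof -
  have "measure (finite_law S w v) A = measure (measure_pmf (weighted_pmf S w)) {y\<in>S. v y \<in> A}"
    unfolding finite_law_def using that set_pmf_weighted_pmf
    by (subst measure_distr) (auto intro!: measure_eq_AE AE_pmfI)
  also have "\<dots> = (\<Sum>y\<in>{y\<in>S. v y \<in> A}. w y)"
    by (subst measure_measure_pmf_finite) (auto simp: finite_support pmf_weighted_pmf)
  finally show ?thesis .
qed

lemma finite_law_in_noise_class:
  assumes "(\<Sum>y\<in>S. w y * v y) = 0" and "(\<Sum>y\<in>S. w y * (v y)\<^sup>2) = 1"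
    and "\<And>t. t \<ge> 2 \<Longrightarrow> (\<Sum>y\<in>{y\<in>S. \<bar>v y\<bar> > t}. w y) \<le> 2 * exp (- ((t / \<tau>) powr a))"
  shows "finite_law S w v \<in> noise_class a \<tau>"
proof -
  have "{x::real. \<bar>x\<bar> > t} \<in> sets borel" for t by measurable
  then show ?thesis
    unfolding noise_class_def
    using assms prob_space_finite_law measure_finite_law
    by (auto simp: integrable_finite_law integral_finite_law)
qed

lemma nn_integral_PiM_finite_law:
  assumes "finite I" and "F \<in> borel_measurable (PiM I (\<lambda>_. finite_law S w v))"
  shows "(\<integral>\<^sup>+x. F x \<partial>PiM I (\<lambda>_. finite_law S w v)) =
     (\<Sum>u\<in>I \<rightarrow>\<^sub>E S. ennreal (\<Prod>i\<in>I. w (u i)) * F (restrict (\<lambda>i. v (u i)) I))"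
  using assms
proof (induction I arbitrary: F rule: finite_induct)
  case empty
  then show ?case by (simp add: PiM_empty nn_integral_count_space_finite)
next
  case (insert i I)
  let ?P = "finite_law S w v"
  interpret product_prob_space "\<lambda>_. ?P"
    by (simp add: product_prob_space_def product_prob_space_axioms_def product_sigma_finite_def
      prob_space_finite_law prob_space_imp_sigma_finite)
  have update_measurable: "(\<lambda>x. F (x(i := y))) \<in> borel_measurable (PiM I (\<lambda>_. ?P))" for y
    using insert.prems by measurable
  have "(\<integral>\<^sup>+x. F x \<partial>PiM (insert i I) (\<lambda>_. ?P)) = (\<integral>\<^sup>+x. (\<integral>\<^sup>+y. F (x(i := y)) \<partial>?P) \<partial>PiM I (\<lambda>_. ?P))"
    using insert by (intro product_nn_integral_insert) auto
  also have "\<dots> = (\<integral>\<^sup>+x. (\<Sum>y\<in>S. ennreal (w y) * F (x(i := v y))) \<partial>PiM I (\<lambda>_. ?P))"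
  proof (intro nn_integral_cong nn_integral_finite_law)
    fix x assume "x \<in> space (PiM I (\<lambda>_. ?P))"
    from measurable_comp[OF measurable_component_update[OF this insert.hyps(2)] insert.prems]
    have "(\<lambda>y. F (x(i := y))) \<in> borel_measurable ?P"
      unfolding comp_def .
    then show "(\<lambda>y. F (x(i := y))) \<in> borel_measurable borel"
      by (simp add: measurable_cong_sets[OF sets_finite_law refl])
  qed
  also have "\<dots> = (\<Sum>y\<in>S. \<integral>\<^sup>+x. ennreal (w y) * F (x(i := v y)) \<partial>PiM I (\<lambda>_. ?P))"
    using update_measurable by (intro nn_integral_sum) auto
  also have "\<dots> = (\<Sum>y\<in>S. ennreal (w y) * (\<integral>\<^sup>+x. F (x(i := v y)) \<partial>PiM I (\<lambda>_. ?P)))"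
    using update_measurable by (intro sum.cong refl nn_integral_cmult)
  also have "\<dots> = (\<Sum>y\<in>S. \<Sum>u\<in>I \<rightarrow>\<^sub>E S.
      ennreal (w y) * (ennreal (\<Prod>j\<in>I. w (u j)) * F ((restrict (\<lambda>j. v (u j)) I)(i := v y))))"
    using update_measurable by (intro sum.cong refl) (simp add: insert.IH sum_distrib_left restrict_def)
  also have "\<dots> = (\<Sum>u\<in>insert i I \<rightarrow>\<^sub>E S. ennreal (\<Prod>j\<in>insert i I. w (u j)) *
      F (restrict (\<lambda>j. v (u j)) (insert i I)))"
  proof (subst sum_PiE_insert, (use insert finite_support in auto)[3], intro sum.cong refl)
    fix y u assume "y \<in> S" "u \<in> I \<rightarrow>\<^sub>E S"
    moreover have "(\<Prod>j\<in>I. w ((u(i := y)) j)) = (\<Prod>j\<in>I. w (u j))"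
      using insert.hyps by (intro prod.cong) auto
    moreover have "restrict (\<lambda>j. v ((u(i := y)) j)) (insert i I) = (restrict (\<lambda>j. v (u j)) I)(i := v y)"
      using insert.hyps by (auto simp: fun_eq_iff)
    ultimately show "ennreal (w y) * (ennreal (\<Prod>j\<in>I. w (u j)) * F ((restrict (\<lambda>j. v (u j)) I)(i := v y))) =
        ennreal (\<Prod>j\<in>insert i I. w ((u(i := y)) j)) * F (restrict (\<lambda>j. v ((u(i := y)) j)) (insert i I))"
      using insert.hyps weights_nonneg
      by (simp add: ennreal_mult prod_nonneg PiE_iff mult.assoc)
  qed
  finally show ?case .
qed

lemma risk_finite_law:
  assumes ell: "ell \<in> loss_class" and k: "c / phi_exp a s d \<ge> 0"
    and T: "T \<in> borel_measurable (PiM {..<d} (\<lambda>_. borel))"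
  shows "risk ell a c s d T (finite_law S w v) \<sigma> \<theta> = ennreal (\<Sum>u\<in>{..<d} \<rightarrow>\<^sub>E S.
     (\<Prod>i<d. w (u i)) * ell (c / phi_exp a s d * \<bar>T (restrict (\<lambda>i. \<theta> i + \<sigma> * v (u i)) {..<d}) / \<sigma>\<^sup>2 - 1\<bar>))"
proof -
  define k where "k = c / phi_exp a s d"
  \<comment> \<open>a monotone extension of ell to the whole line, hence Borel measurable\<close>
  define ell' where "ell' = (\<lambda>x. ell (max 0 x))"
  have "mono ell'"
    using ell unfolding ell'_def mono_def loss_class_def mono_on_def by auto
  then have ell'_measurable: "ell' \<in> borel_measurable borel"
    by (rule borel_measurable_mono)
  have ell'_eq: "ell' (k * z) = ell (k * z)" if "z \<ge> 0" for z
  proof -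
    have "k * z \<ge> 0"
      unfolding k_def by (rule mult_nonneg_nonneg[OF k that])
    then show ?thesis
      unfolding ell'_def by (simp add: max_def)
  qed
  let ?G = "\<lambda>\<xi>. ennreal (ell' (k * \<bar>T (obs d \<theta> \<sigma> \<xi>) / \<sigma>\<^sup>2 - 1\<bar>))"
  have "obs d \<theta> \<sigma> \<in> measurable (PiM {..<d} (\<lambda>_. borel)) (PiM {..<d} (\<lambda>_. borel))"
    unfolding obs_def by measurable
  then have "?G \<in> borel_measurable (PiM {..<d} (\<lambda>_. borel))"
    using ell'_measurable T by measurable
  moreover have "sets (PiM {..<d} (\<lambda>_. finite_law S w v)) = sets (PiM {..<d} (\<lambda>_. borel))"
    by (rule sets_PiM_cong) auto
  ultimately have G_measurable: "?G \<in> borel_measurable (PiM {..<d} (\<lambda>_. finite_law S w v))"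
    using measurable_cong_sets[of "PiM {..<d} (\<lambda>_. finite_law S w v)" "PiM {..<d} (\<lambda>_. borel)"
      "borel :: ennreal measure" "borel"] by simp
  have "risk ell a c s d T (finite_law S w v) \<sigma> \<theta> = (\<integral>\<^sup>+\<xi>. ?G \<xi> \<partial>PiM {..<d} (\<lambda>_. finite_law S w v))"
    unfolding risk_def k_def[symmetric] by (simp add: ell'_eq)
  also have "\<dots> = (\<Sum>u\<in>{..<d} \<rightarrow>\<^sub>E S. ennreal (\<Prod>i<d. w (u i)) * ?G (restrict (\<lambda>i. v (u i)) {..<d}))"
    by (rule nn_integral_PiM_finite_law[OF _ G_measurable]) simp
  also have "\<dots> = (\<Sum>u\<in>{..<d} \<rightarrow>\<^sub>E S. ennreal (\<Prod>i<d. w (u i)) *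
      ennreal (ell (k * \<bar>T (restrict (\<lambda>i. \<theta> i + \<sigma> * v (u i)) {..<d}) / \<sigma>\<^sup>2 - 1\<bar>)))"
  proof (intro sum.cong refl)
    fix u :: "nat \<Rightarrow> 'b"
    have "obs d \<theta> \<sigma> (restrict (\<lambda>i. v (u i)) {..<d}) = restrict (\<lambda>i. \<theta> i + \<sigma> * v (u i)) {..<d}"
      unfolding obs_def by auto
    then show "ennreal (\<Prod>i<d. w (u i)) * ?G (restrict (\<lambda>i. v (u i)) {..<d}) =
        ennreal (\<Prod>i<d. w (u i)) * ennreal (ell (k * \<bar>T (restrict (\<lambda>i. \<theta> i + \<sigma> * v (u i)) {..<d}) / \<sigma>\<^sup>2 - 1\<bar>))"
      by (simp only: ell'_eq[OF abs_ge_zero])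
  qed
  also have "\<dots> = ennreal (\<Sum>u\<in>{..<d} \<rightarrow>\<^sub>E S.
      (\<Prod>i<d. w (u i)) * ell (k * \<bar>T (restrict (\<lambda>i. \<theta> i + \<sigma> * v (u i)) {..<d}) / \<sigma>\<^sup>2 - 1\<bar>))"
  proof -
    have weight_nonneg: "0 \<le> (\<Prod>i<d. w (u i))" if "u \<in> {..<d} \<rightarrow>\<^sub>E S" for u
      using that weights_nonneg by (auto intro!: prod_nonneg simp: PiE_iff)
    have loss_nonneg: "0 \<le> ell (k * z)" if "0 \<le> z" for z
      using ell mult_nonneg_nonneg[OF k that] unfolding k_def loss_class_def by auto
    show ?thesis
      using weight_nonneg loss_nonneg
      by (subst sum_ennreal[symmetric]) (auto intro!: sum.cong simp: ennreal_mult)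
  qed
  finally show ?thesis
    unfolding k_def .
qed
end

section \<open>Two-point lower bounds\<close>

lemma loss_class_mono: "ell \<in> loss_class \<Longrightarrow> 0 \<le> x \<Longrightarrow> x \<le> y \<Longrightarrow> ell x \<le> ell y"
  unfolding loss_class_def mono_on_def by auto

lemma loss_class_positive_point:
  assumes "ell \<in> loss_class"
  shows "\<exists>x0>0. ell x0 > 0"
proof -
  obtain x0 where x0: "x0 \<ge> 0" "ell x0 \<noteq> 0"
    using assms unfolding loss_class_def by blast
  moreover have "ell 0 = 0" and "ell x0 \<ge> 0"
    using assms x0 unfolding loss_class_def by auto
  ultimately have "x0 > 0" and "ell x0 > 0"
    by (auto simp: order_le_less)
  then show ?thesis
    by blast
qed

lemma loss_class_nonneg: "ell \<in> loss_class \<Longrightarrow> 0 \<le> x \<Longrightarrow> 0 \<le> ell x"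
  unfolding loss_class_def by auto

lemma relative_errors_separated:
  fixes v1 v2 g t :: real
  assumes g: "g > 0" and v2: "v2 > 0" and v1: "v1 = (1 + g) * v2"
  shows "min g 1 / 4 \<le> \<bar>t / v1 - 1\<bar> \<or> min g 1 / 4 \<le> \<bar>t / v2 - 1\<bar>"
proof (rule ccontr)
  define r where "r = t / v1"
  have "v2 + g * v2 > 0"
    using v2 g by (simp add: add_pos_pos)
  then have "t / v2 = (1 + g) * r"
    using v2 g unfolding r_def v1 by (simp add: field_simps)
  moreover assume "\<not> ?thesis"
  ultimately have close: "\<bar>r - 1\<bar> < min g 1 / 4" "\<bar>(1 + g) * r - 1\<bar> < min g 1 / 4"
    unfolding r_def by auto
  then have "r > 3 / 4"
    using min.cobounded2[of g 1] unfolding abs_less_iff by linarith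
  have "g * r = ((1 + g) * r - 1) - (r - 1)"
    by (simp add: algebra_simps)
  then have "g * r < min g 1 / 2"
    using close unfolding abs_less_iff by linarith
  moreover have "g * (3 / 4) \<le> g * r"
    using g \<open>r > 3 / 4\<close> by (intro mult_left_mono) auto
  ultimately show False
    using g by linarith
qed

lemma loss_relative_errors_ge:
  assumes ell: "ell \<in> loss_class" and x0: "0 \<le> x0" and k: "0 \<le> k" "x0 \<le> k * (min g 1 / 4)"
    and g: "g > 0" and v2: "v2 > 0" and v1: "v1 = (1 + g) * v2"
  shows "ell x0 \<le> ell (k * \<bar>t / v1 - 1\<bar>) + ell (k * \<bar>t / v2 - 1\<bar>)"
proof -
  have nonneg: "0 \<le> ell (k * \<bar>t / v1 - 1\<bar>)" "0 \<le> ell (k * \<bar>t / v2 - 1\<bar>)"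
    using k by (auto intro!: loss_class_nonneg[OF ell])
  have bound: "ell x0 \<le> ell (k * \<bar>t / v - 1\<bar>)" if "min g 1 / 4 \<le> \<bar>t / v - 1\<bar>" for v
  proof (rule loss_class_mono[OF ell x0])
    show "x0 \<le> k * \<bar>t / v - 1\<bar>"
      using k(2) mult_left_mono[OF that k(1)] by linarith
  qed
  from relative_errors_separated[OF g v2 v1, of t] show ?thesis
  proof
    assume "min g 1 / 4 \<le> \<bar>t / v1 - 1\<bar>"
    then show ?thesis
      using bound[of v1] nonneg by linarith
  next
    assume "min g 1 / 4 \<le> \<bar>t / v2 - 1\<bar>"
    then show ?thesis
      using bound[of v2] nonneg by linarith
  qed
qed

lemma le_cam_affinity_bound:
  fixes Q1 Q2 G1 G2 :: "'u \<Rightarrow> real"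
  assumes U: "finite U" and q1: "\<And>u. u \<in> U \<Longrightarrow> Q1 u \<ge> 0" and q2: "\<And>u. u \<in> U \<Longrightarrow> Q2 u \<ge> 0"
    and s1: "sum Q1 U = 1" and s2: "sum Q2 U = 1"
    and g1: "\<And>u. u \<in> U \<Longrightarrow> G1 u \<ge> 0" and g2: "\<And>u. u \<in> U \<Longrightarrow> G2 u \<ge> 0"
    and g: "\<And>u. u \<in> U \<Longrightarrow> G1 u + G2 u \<ge> l0" and l0: "l0 \<ge> 0"
  shows "l0 * (\<Sum>u\<in>U. sqrt (Q1 u * Q2 u))\<^sup>2 / 2 \<le> (\<Sum>u\<in>U. Q1 u * G1 u) + (\<Sum>u\<in>U. Q2 u * G2 u)"
proof -
  have "(\<Sum>u\<in>U. sqrt (Q1 u * Q2 u))\<^sup>2 = (\<Sum>u\<in>U. sqrt (min (Q1 u) (Q2 u)) * sqrt (max (Q1 u) (Q2 u)))\<^sup>2"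
    by (intro arg_cong[where f="\<lambda>x. x\<^sup>2"] sum.cong)
      (auto simp: real_sqrt_mult[symmetric] min_def max_def mult.commute)
  also have "\<dots> \<le> (\<Sum>u\<in>U. (sqrt (min (Q1 u) (Q2 u)))\<^sup>2) * (\<Sum>u\<in>U. (sqrt (max (Q1 u) (Q2 u)))\<^sup>2)"
    by (rule Cauchy_Schwarz_ineq_sum)
  also have "\<dots> = (\<Sum>u\<in>U. min (Q1 u) (Q2 u)) * (\<Sum>u\<in>U. max (Q1 u) (Q2 u))"
    using q1 q2 by (intro arg_cong2[where f="(*)"] sum.cong) (auto simp: le_max_iff_disj)
  also have "\<dots> \<le> (\<Sum>u\<in>U. min (Q1 u) (Q2 u)) * 2"
  proof (rule mult_left_mono)
    have "(\<Sum>u\<in>U. max (Q1 u) (Q2 u)) \<le> (\<Sum>u\<in>U. Q1 u + Q2 u)"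
      using q1 q2 by (intro sum_mono) auto
    then show "(\<Sum>u\<in>U. max (Q1 u) (Q2 u)) \<le> 2"
      using s1 s2 by (simp add: sum.distrib)
    show "0 \<le> (\<Sum>u\<in>U. min (Q1 u) (Q2 u))"
      using q1 q2 by (intro sum_nonneg) auto
  qed
  finally have "(\<Sum>u\<in>U. sqrt (Q1 u * Q2 u))\<^sup>2 / 2 \<le> (\<Sum>u\<in>U. min (Q1 u) (Q2 u))"
    by simp
  then have "l0 * ((\<Sum>u\<in>U. sqrt (Q1 u * Q2 u))\<^sup>2 / 2) \<le> l0 * (\<Sum>u\<in>U. min (Q1 u) (Q2 u))"
    using l0 by (rule mult_left_mono)
  then have "l0 * (\<Sum>u\<in>U. sqrt (Q1 u * Q2 u))\<^sup>2 / 2 \<le> (\<Sum>u\<in>U. min (Q1 u) (Q2 u) * l0)"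
    by (simp add: sum_distrib_left mult_ac)
  also have "\<dots> \<le> (\<Sum>u\<in>U. Q1 u * G1 u + Q2 u * G2 u)"
  proof (rule sum_mono)
    fix u assume u: "u \<in> U"
    have "min (Q1 u) (Q2 u) * l0 \<le> min (Q1 u) (Q2 u) * (G1 u + G2 u)"
      using g[OF u] q1[OF u] q2[OF u] by (intro mult_left_mono) auto
    also have "\<dots> \<le> Q1 u * G1 u + Q2 u * G2 u"
      using g1[OF u] g2[OF u] by (simp add: distrib_left add_mono mult_right_mono)
    finally show "min (Q1 u) (Q2 u) * l0 \<le> Q1 u * G1 u + Q2 u * G2 u" .
  qed
  finally show ?thesis
    by (simp add: sum.distrib)
qed

lemma sqrt_prod: "sqrt (prod f A) = (\<Prod>x\<in>A. sqrt (f x))"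
  by (induction A rule: infinite_finite_induct) (auto simp: real_sqrt_mult)

lemma affinity_PiE:
  fixes P Q :: "'b \<Rightarrow> real"
  assumes "finite I" and "finite S"
  shows "(\<Sum>u\<in>I \<rightarrow>\<^sub>E S. sqrt ((\<Prod>i\<in>I. P (u i)) * (\<Prod>i\<in>I. Q (u i)))) =
    (\<Sum>x\<in>S. sqrt (P x * Q x)) ^ card I"
proof -
  have "(\<Sum>u\<in>I \<rightarrow>\<^sub>E S. sqrt ((\<Prod>i\<in>I. P (u i)) * (\<Prod>i\<in>I. Q (u i)))) =
      (\<Sum>u\<in>I \<rightarrow>\<^sub>E S. \<Prod>i\<in>I. sqrt (P (u i) * Q (u i)))"
    by (simp add: prod.distrib[symmetric] sqrt_prod)
  also have "\<dots> = (\<Prod>i\<in>I. \<Sum>x\<in>S. sqrt (P x * Q x))"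
    using assms by (rule prod_sum_PiE[symmetric])
  finally show ?thesis
    by simp
qed

lemma sum_PiE_prod_card:
  fixes w :: "'b \<Rightarrow> real"
  assumes I: "finite I" and S: "finite S" and w: "sum w S = 1"
  shows "(\<Sum>u\<in>I \<rightarrow>\<^sub>E S. (\<Prod>j\<in>I. w (u j)) * real (card {i\<in>I. B (u i)})) =
    real (card I) * (\<Sum>x\<in>{x\<in>S. B x}. w x)"
proof -
  have coordinate: "(\<Sum>u\<in>I \<rightarrow>\<^sub>E S. (\<Prod>j\<in>I. w (u j)) * of_bool (B (u i))) = (\<Sum>x\<in>{x\<in>S. B x}. w x)"
    if i: "i \<in> I" for i
  proof -
    define g where "g j x = (if j = i then w x * of_bool (B x) else w x)" for j x
    have "(\<Sum>u\<in>I \<rightarrow>\<^sub>E S. (\<Prod>j\<in>I. w (u j)) * of_bool (B (u i))) = (\<Sum>u\<in>I \<rightarrow>\<^sub>E S. \<Prod>j\<in>I. g j (u j))"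
    proof (intro sum.cong refl)
      fix u :: "'a \<Rightarrow> 'b"
      have "(\<Prod>j\<in>I - {i}. g j (u j)) = (\<Prod>j\<in>I - {i}. w (u j))"
        by (intro prod.cong) (auto simp: g_def)
      then show "(\<Prod>j\<in>I. w (u j)) * of_bool (B (u i)) = (\<Prod>j\<in>I. g j (u j))"
        by (simp add: prod.remove[OF I i] g_def)
    qed
    also have "\<dots> = (\<Prod>j\<in>I. \<Sum>x\<in>S. g j x)"
      using I S by (rule prod_sum_PiE[symmetric])
    also have "\<dots> = (\<Sum>x\<in>S. g i x)"
      using i I w by (subst prod.remove) (auto simp: g_def intro!: prod.neutral)
    also have "\<dots> = (\<Sum>x\<in>{x\<in>S. B x}. w x)"
      unfolding g_def by (subst sum.inter_filter[OF S]) (auto intro!: sum.cong)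
    finally show ?thesis .
  qed
  have "(\<Sum>u\<in>I \<rightarrow>\<^sub>E S. (\<Prod>j\<in>I. w (u j)) * real (card {i\<in>I. B (u i)})) =
      (\<Sum>i\<in>I. \<Sum>u\<in>I \<rightarrow>\<^sub>E S. (\<Prod>j\<in>I. w (u j)) * of_bool (B (u i)))"
  proof -
    have "real (card {i\<in>I. B (u i)}) = (\<Sum>i\<in>I. of_bool (B (u i)))" for u :: "'a \<Rightarrow> 'b"
      using I by (simp add: Int_def)
    then show ?thesis
      by (simp add: sum_distrib_left sum.swap[of _ "I \<rightarrow>\<^sub>E S"])
  qed
  also have "\<dots> = real (card I) * (\<Sum>x\<in>{x\<in>S. B x}. w x)"
    by (simp add: coordinate)
  finally show ?thesis .
qed

section \<open>The hard noise distributions\<close>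

definition ternary :: "nat \<Rightarrow> real" where
  "ternary j = (if j = 0 then 0 else if j = 1 then 1 else - 1)"

definition ternary_weight :: "real \<Rightarrow> nat \<Rightarrow> real" where
  "ternary_weight p j = (if j = 0 then 1 - p else p / 2)"

definition rademacher :: "nat \<Rightarrow> real" where
  "rademacher j = (if j = 0 then 1 else - 1)"

lemma finite_weights_ternary_weight:
  "0 \<le> p \<Longrightarrow> p \<le> 1 \<Longrightarrow> finite_weights {0::nat, 1, 2} (ternary_weight p)"
  by unfold_locales (auto simp: ternary_weight_def)

lemma ternary_affinity_ge:
  assumes d: "d \<ge> 1"
  shows "1 / 2 \<le> ((\<Sum>j\<in>{0::nat, 1, 2}.
    sqrt (ternary_weight ((1 + 1 / sqrt d) / 2) j * ternary_weight (1 / 2) j)) ^ d)\<^sup>2"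
proof -
  define p where "p = (1 + 1 / sqrt d) / 2"
  define b where "b = (\<Sum>j\<in>{0::nat, 1, 2}. sqrt (ternary_weight p j * ternary_weight (1 / 2) j))"
  have p: "1 / 2 \<le> p" "p \<le> 1"
    using d by (auto simp: p_def divide_simps)
  have b: "b = sqrt ((1 - p) / 2) + sqrt (p / 2)"
  proof -
    have "sqrt (p / 2 * (1 / 2 / 2)) = sqrt (p / 2) / 2"
      using real_sqrt_mult[of 4 2] by (simp add: real_sqrt_mult real_sqrt_divide)
    then show ?thesis
      unfolding b_def by (simp add: ternary_weight_def)
  qed
  have "sqrt ((1 - p) / 2) * sqrt (p / 2) = sqrt ((1 - p) / 2 * (p / 2))"
    by (rule real_sqrt_mult[symmetric])
  also have "(1 - p) / 2 * (p / 2) = (1 - 1 / d) / 16"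
    unfolding p_def using d by (simp add: field_simps power2_eq_square)
  also have "sqrt ((1 - 1 / d) / 16) = sqrt (1 - 1 / d) / 4"
    by (simp add: real_sqrt_divide)
  finally have cross: "sqrt ((1 - p) / 2) * sqrt (p / 2) = sqrt (1 - 1 / d) / 4" .
  have "0 \<le> 1 - 1 / real d" "1 - 1 / real d \<le> 1"
    using d by (auto simp: divide_simps)
  then have "(1 - 1 / real d) * (1 - 1 / real d) \<le> (1 - 1 / real d) * 1"
    by (intro mult_left_mono)
  then have "1 - 1 / real d \<le> sqrt (1 - 1 / real d)"
    by (intro real_le_rsqrt) (simp add: power2_eq_square)
  then have "1 - 1 / (2 * d) \<le> 1 / 2 + sqrt (1 - 1 / d) / 2"
    by (simp add: field_simps)
  also have "\<dots> = b\<^sup>2"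
  proof -
    have "b\<^sup>2 = (1 - p) / 2 + p / 2 + 2 * (sqrt ((1 - p) / 2) * sqrt (p / 2))"
      using b p by (simp add: power2_sum)
    also have "\<dots> = 1 / 2 + sqrt (1 - 1 / d) / 2"
      unfolding cross by (simp add: field_simps)
    finally show ?thesis
      by simp
  qed
  finally have "1 - 1 / (2 * d) \<le> b\<^sup>2" .
  then have "(1 - 1 / (2 * d)) ^ d \<le> (b\<^sup>2) ^ d"
    using d by (intro power_mono) (auto simp: divide_simps)
  moreover have "1 - d * (1 / (2 * d)) \<le> (1 - 1 / (2 * d)) ^ d"
    using Bernoulli_inequality[of "- (1 / (2 * real d))" d] d by (simp add: divide_simps)
  moreover have "real d * (1 / (2 * real d)) = 1 / 2"
    using d by simp
  ultimately have "1 / 2 \<le> (b\<^sup>2) ^ d"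
    by linarith
  then show ?thesis
    unfolding b_def p_def by (simp add: power_mult[symmetric] mult.commute)
qed

lemma dense_two_point_bound:
  fixes G1 G2 :: "(nat \<Rightarrow> nat) \<Rightarrow> real"
  assumes d: "d \<ge> 1" and l0: "l0 \<ge> 0"
    and G1: "\<And>u. u \<in> {..<d} \<rightarrow>\<^sub>E {0, 1, 2} \<Longrightarrow> G1 u \<ge> 0"
    and G2: "\<And>u. u \<in> {..<d} \<rightarrow>\<^sub>E {0, 1, 2} \<Longrightarrow> G2 u \<ge> 0"
    and G: "\<And>u. u \<in> {..<d} \<rightarrow>\<^sub>E {0, 1, 2} \<Longrightarrow> l0 \<le> G1 u + G2 u"
  shows "l0 / 4 \<le> (\<Sum>u\<in>{..<d} \<rightarrow>\<^sub>E {0, 1, 2}. (\<Prod>i<d. ternary_weight ((1 + 1 / sqrt d) / 2) (u i)) * G1 u)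
    + (\<Sum>u\<in>{..<d} \<rightarrow>\<^sub>E {0, 1, 2}. (\<Prod>i<d. ternary_weight (1 / 2) (u i)) * G2 u)"
proof -
  define p where "p = (1 + 1 / sqrt d) / 2"
  let ?U = "{..<d} \<rightarrow>\<^sub>E {0::nat, 1, 2}"
  have p: "0 \<le> p" "p \<le> 1"
    using d by (auto simp: p_def divide_simps)
  have weights_nonneg: "0 \<le> (\<Prod>i<d. ternary_weight q (u i))" if "0 \<le> q" "q \<le> 1" for q u
    using that by (intro prod_nonneg) (auto simp: ternary_weight_def)
  have weights_sum: "(\<Sum>u\<in>?U. \<Prod>i<d. ternary_weight q (u i)) = 1" for q
    by (rule sum_prod_PiE_eq_1) (auto simp: ternary_weight_def)
  have "l0 / 4 \<le> l0 * ((\<Sum>j\<in>{0::nat, 1, 2}. sqrt (ternary_weight p j * ternary_weight (1 / 2) j)) ^ d)\<^sup>2 / 2"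
    using mult_left_mono[OF ternary_affinity_ge[OF d] l0] unfolding p_def by simp
  also have "\<dots> = l0 * (\<Sum>u\<in>?U. sqrt ((\<Prod>i<d. ternary_weight p (u i)) * (\<Prod>i<d. ternary_weight (1 / 2) (u i))))\<^sup>2 / 2"
    by (subst affinity_PiE) auto
  also have "\<dots> \<le> (\<Sum>u\<in>?U. (\<Prod>i<d. ternary_weight p (u i)) * G1 u) + (\<Sum>u\<in>?U. (\<Prod>i<d. ternary_weight (1 / 2) (u i)) * G2 u)"
    using p weights_nonneg weights_sum G1 G2 G l0 by (intro le_cam_affinity_bound finite_PiE) auto
  finally show ?thesis
    unfolding p_def .
qed

lemma mixture_two_point_bound:
  fixes wA :: "'a \<Rightarrow> real" and wB :: "'b \<Rightarrow> real" and G1 G2 :: "'a \<Rightarrow> 'b \<Rightarrow> real"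
  assumes A: "finite A" and B: "finite B"
    and wA: "\<And>\<alpha>. \<alpha> \<in> A \<Longrightarrow> wA \<alpha> \<ge> 0" "sum wA A = 1"
    and wB: "\<And>\<beta>. \<beta> \<in> B \<Longrightarrow> wB \<beta> \<ge> 0" "sum wB B = 1"
    and N: "N \<subseteq> A" "sum wA N \<le> 1 / 2"
    and G1: "\<And>\<alpha> \<beta>. \<alpha> \<in> A \<Longrightarrow> \<beta> \<in> B \<Longrightarrow> G1 \<alpha> \<beta> \<ge> 0"
    and G: "\<And>\<alpha> \<beta>. \<alpha> \<in> A \<Longrightarrow> \<beta> \<in> B \<Longrightarrow> l0 \<le> G1 \<alpha> \<beta> + G2 \<alpha> \<beta>"
  shows "l0 / 4 \<le> (\<Sum>\<alpha>\<in>A. \<Sum>\<beta>\<in>B. wA \<alpha> * wB \<beta> * G1 \<alpha> \<beta>)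
    \<or> (\<exists>\<alpha>\<in>A - N. l0 / 4 \<le> (\<Sum>\<beta>\<in>B. wB \<beta> * G2 \<alpha> \<beta>))"
proof (rule ccontr)
  define E1 where "E1 = (\<Sum>\<alpha>\<in>A. \<Sum>\<beta>\<in>B. wA \<alpha> * wB \<beta> * G1 \<alpha> \<beta>)"
  \<comment> \<open>truncating G2 at l0 keeps the bound l0 \<le> G1 + G2 and makes every row average at most l0\<close>
  define m where "m \<alpha> = (\<Sum>\<beta>\<in>B. wB \<beta> * min (G2 \<alpha> \<beta>) l0)" for \<alpha>
  assume contra: "\<not> ?thesis"
  then have E1_small: "E1 < l0 / 4"
    unfolding E1_def by auto
  have rows_small: "(\<Sum>\<beta>\<in>B. wB \<beta> * G2 \<alpha> \<beta>) < l0 / 4" if "\<alpha> \<in> A - N" for \<alpha>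
    using contra that by (meson not_le)
  have "0 \<le> E1"
    unfolding E1_def using wA wB G1 by (intro sum_nonneg mult_nonneg_nonneg) auto
  then have l0: "0 < l0"
    using E1_small by linarith
  have rows: "(\<Sum>\<beta>\<in>B. wA \<alpha> * wB \<beta> * l0) = wA \<alpha> * l0" for \<alpha>
  proof -
    have "(\<Sum>\<beta>\<in>B. wA \<alpha> * wB \<beta> * l0) = wA \<alpha> * l0 * sum wB B"
      by (simp add: sum_distrib_left mult_ac)
    then show ?thesis
      using wB(2) by simp
  qed
  have "l0 = sum wA A * l0"
    using wA(2) by simp
  also have "\<dots> = (\<Sum>\<alpha>\<in>A. wA \<alpha> * l0)"
    by (rule sum_distrib_right)
  also have "\<dots> = (\<Sum>\<alpha>\<in>A. \<Sum>\<beta>\<in>B. wA \<alpha> * wB \<beta> * l0)"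
    by (intro sum.cong refl rows[symmetric])
  also have "\<dots> \<le> (\<Sum>\<alpha>\<in>A. \<Sum>\<beta>\<in>B. wA \<alpha> * wB \<beta> * (G1 \<alpha> \<beta> + min (G2 \<alpha> \<beta>) l0))"
    using wA wB G1 G by (intro sum_mono mult_left_mono) (auto simp: min_def)
  also have "\<dots> = E1 + (\<Sum>\<alpha>\<in>A. wA \<alpha> * m \<alpha>)"
    unfolding E1_def m_def sum_distrib_left sum.distrib[symmetric]
    by (intro sum.cong refl) (simp add: algebra_simps)
  finally have l0_le: "l0 \<le> E1 + (\<Sum>\<alpha>\<in>A. wA \<alpha> * m \<alpha>)" .
  have m_le: "m \<alpha> \<le> l0" for \<alpha>
  proof -
    have "m \<alpha> \<le> (\<Sum>\<beta>\<in>B. wB \<beta> * l0)"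
      unfolding m_def using wB by (intro sum_mono mult_left_mono) auto
    then show ?thesis
      by (simp add: sum_distrib_right[symmetric] wB)
  qed
  have "(\<Sum>\<alpha>\<in>A - N. wA \<alpha> * m \<alpha>) \<le> (\<Sum>\<alpha>\<in>A - N. wA \<alpha> * (l0 / 4))"
  proof (intro sum_mono mult_left_mono)
    fix \<alpha> assume \<alpha>: "\<alpha> \<in> A - N"
    have "m \<alpha> \<le> (\<Sum>\<beta>\<in>B. wB \<beta> * G2 \<alpha> \<beta>)"
      unfolding m_def using wB by (intro sum_mono mult_left_mono) auto
    then show "m \<alpha> \<le> l0 / 4"
      using rows_small[OF \<alpha>] by linarith
  qed (use wA in auto)
  also have "\<dots> = sum wA (A - N) * (l0 / 4)"
    by (simp add: sum_distrib_right)
  also have "\<dots> \<le> 1 * (l0 / 4)"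
  proof (rule mult_right_mono)
    have "sum wA (A - N) \<le> sum wA A"
      using A wA by (intro sum_mono2) auto
    then show "sum wA (A - N) \<le> 1"
      using wA(2) by simp
  qed (use l0 in simp)
  moreover have "(\<Sum>\<alpha>\<in>N. wA \<alpha> * m \<alpha>) \<le> l0 / 2"
  proof -
    have "(\<Sum>\<alpha>\<in>N. wA \<alpha> * m \<alpha>) \<le> (\<Sum>\<alpha>\<in>N. wA \<alpha> * l0)"
      using N wA m_le by (intro sum_mono mult_left_mono) auto
    also have "\<dots> = sum wA N * l0"
      by (simp add: sum_distrib_right)
    also have "\<dots> \<le> 1 / 2 * l0"
      using N(2) l0 by (intro mult_right_mono) simp_all
    finally show ?thesis
      by simp
  qed
  moreover have "(\<Sum>\<alpha>\<in>A. wA \<alpha> * m \<alpha>) = (\<Sum>\<alpha>\<in>A - N. wA \<alpha> * m \<alpha>) + (\<Sum>\<alpha>\<in>N. wA \<alpha> * m \<alpha>)"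
    by (rule sum.subset_diff[OF N(1) A])
  ultimately show False
    using l0_le E1_small by linarith
qed

lemma ternary_weight_many_nonzero_le:
  fixes s d :: nat
  assumes s: "1 \<le> s" "s \<le> d"
  shows "(\<Sum>\<alpha>\<in>{\<alpha>\<in>{..<d} \<rightarrow>\<^sub>E {0::nat, 1, 2}. s < card {i\<in>{..<d}. \<alpha> i \<noteq> 0}}.
    \<Prod>i<d. ternary_weight (s / (2 * d)) (\<alpha> i)) \<le> 1 / 2"
proof -
  let ?U = "{..<d} \<rightarrow>\<^sub>E {0::nat, 1, 2}"
  define q :: real where "q = s / (2 * d)"
  define W where "W \<alpha> = (\<Prod>i<d. ternary_weight q (\<alpha> i))" for \<alpha> :: "nat \<Rightarrow> nat"
  define C where "C \<alpha> = real (card {i\<in>{..<d}. \<alpha> i \<noteq> 0})" for \<alpha> :: "nat \<Rightarrow> nat"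
  have q: "0 \<le> q" "q \<le> 1"
    using s by (auto simp: q_def divide_simps)
  have W: "0 \<le> W \<alpha>" for \<alpha>
    unfolding W_def using q by (intro prod_nonneg) (auto simp: ternary_weight_def)
  \<comment> \<open>Markov's inequality for the number of nonzero coordinates, whose mean is d q = s / 2\<close>
  let ?N = "{\<alpha>\<in>?U. s < card {i\<in>{..<d}. \<alpha> i \<noteq> 0}}"
  have "(\<Sum>\<alpha>\<in>?N. W \<alpha>) \<le> (\<Sum>\<alpha>\<in>?N. W \<alpha> * (C \<alpha> / (s + 1)))"
  proof (intro sum_mono)
    fix \<alpha> assume "\<alpha> \<in> ?N"
    then have "real (Suc s) \<le> C \<alpha>"
      unfolding C_def of_nat_le_iff by simp
    then have "1 \<le> C \<alpha> / (s + 1)"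
      by simp
    from mult_left_mono[OF this W] show "W \<alpha> \<le> W \<alpha> * (C \<alpha> / (s + 1))"
      by simp
  qed
  also have "\<dots> \<le> (\<Sum>\<alpha>\<in>?U. W \<alpha> * (C \<alpha> / (s + 1)))"
  proof (rule sum_mono2)
    show "finite ?U"
      by (rule finite_PiE) auto
    show "0 \<le> W \<alpha> * (C \<alpha> / (s + 1))" for \<alpha>
      using W[of \<alpha>] by (simp add: C_def)
  qed blast
  also have "\<dots> = (\<Sum>\<alpha>\<in>?U. W \<alpha> * C \<alpha>) / (s + 1)"
    by (simp add: sum_divide_distrib)
  also have "(\<Sum>\<alpha>\<in>?U. W \<alpha> * C \<alpha>) = real d * q"
  proof -
    have "{x \<in> {0::nat, 1, 2}. x \<noteq> 0} = {1, 2}"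
      by auto
    then show ?thesis
      unfolding W_def C_def by (subst sum_PiE_prod_card) (simp_all add: ternary_weight_def)
  qed
  also have "real d * q / (s + 1) \<le> 1 / 2"
    using s by (simp add: q_def divide_simps)
  finally show ?thesis
    unfolding W_def C_def q_def by simp
qed

lemma ternary_noise:
  assumes p: "1 / 2 \<le> p" "p \<le> 1"
  shows "finite_law {0::nat, 1, 2} (ternary_weight p) (\<lambda>j. ternary j / sqrt p) \<in> noise_class a \<tau>"
proof -
  interpret finite_weights "{0::nat, 1, 2}" "ternary_weight p"
    using p by (intro finite_weights_ternary_weight) auto
  have "sqrt (1 / 4) < sqrt p"
    using p by (intro real_sqrt_less_mono) auto
  then have small: "\<bar>ternary j / sqrt p\<bar> < 2" for j
    using p by (auto simp: ternary_def abs_divide real_sqrt_divide divide_simps)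
  show ?thesis
  proof (rule finite_law_in_noise_class)
    show "(\<Sum>j\<in>{0::nat, 1, 2}. ternary_weight p j * (ternary j / sqrt p)) = 0"
      by (simp add: ternary_weight_def ternary_def)
    show "(\<Sum>j\<in>{0::nat, 1, 2}. ternary_weight p j * (ternary j / sqrt p)\<^sup>2) = 1"
      using p by (simp add: ternary_weight_def ternary_def power_divide)
    show "(\<Sum>j\<in>{j \<in> {0::nat, 1, 2}. \<bar>ternary j / sqrt p\<bar> > t}. ternary_weight p j) \<le> 2 * exp (- ((t / \<tau>) powr a))"
      if "2 \<le> t" for t
    proof -
      have "\<not> t < \<bar>ternary j / sqrt p\<bar>" for j
        using small[of j] that by linarith
      then have empty: "{j \<in> {0::nat, 1, 2}. \<bar>ternary j / sqrt p\<bar> > t} = {}"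
        by blast
      show ?thesis
        by (subst empty) simp
    qed
  qed
qed

lemma finite_weights_uniform_pair: "finite_weights {0::nat, 1} (\<lambda>_. 1 / 2)"
  by unfold_locales auto

lemma rademacher_noise: "finite_law {0::nat, 1} (\<lambda>_. 1 / 2) rademacher \<in> noise_class a \<tau>"
proof -
  interpret finite_weights "{0::nat, 1}" "\<lambda>_. 1 / 2"
    by (rule finite_weights_uniform_pair)
  show ?thesis
  proof (rule finite_law_in_noise_class)
    show "(\<Sum>y\<in>{y \<in> {0::nat, 1}. \<bar>rademacher y\<bar> > t}. 1 / 2) \<le> 2 * exp (- ((t / \<tau>) powr a))"
      if "2 \<le> t" for t
    proof -
      have empty: "{y \<in> {0::nat, 1}. \<bar>rademacher y\<bar> > t} = {}"
        using that by (auto simp: rademacher_def)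
      show ?thesis
        by (subst empty) simp
    qed
  qed (auto simp: rademacher_def)
qed

definition spike_weight :: "real \<Rightarrow> nat \<times> nat \<Rightarrow> real" where
  "spike_weight q y = ternary_weight q (fst y) / 2"

definition spike_value :: "real \<Rightarrow> nat \<times> nat \<Rightarrow> real" where
  "spike_value A y = A * ternary (fst y) + rademacher (snd y)"

lemma finite_weights_spike_weight:
  "0 \<le> q \<Longrightarrow> q \<le> 1 \<Longrightarrow> finite_weights ({0::nat, 1, 2} \<times> {0::nat, 1}) (spike_weight q)"
  by unfold_locales (auto simp: spike_weight_def ternary_weight_def sum.cartesian_product[symmetric])

lemma sum_spike_support:
  "(\<Sum>y\<in>{0::nat, 1, 2} \<times> {0::nat, 1}. f y) = f (0, 0) + f (0, 1) + f (1, 0) + f (1, 1) + f (2, 0) + f (2, 1)"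
  by (simp add: sum.cartesian_product[symmetric] add_ac)

lemma spike_noise:
  assumes q: "0 \<le> q" "q \<le> 1" and A: "A > 0"
    and tail: "\<And>t. 2 \<le> t \<Longrightarrow> t < A + 1 \<Longrightarrow> q \<le> 2 * exp (- ((t / \<tau>) powr a))"
  shows "finite_law ({0::nat, 1, 2} \<times> {0::nat, 1}) (spike_weight q)
    (\<lambda>y. spike_value A y / sqrt (1 + q * A\<^sup>2)) \<in> noise_class a \<tau>"
proof -
  let ?S = "{0::nat, 1, 2} \<times> {0::nat, 1}" and ?\<sigma> = "sqrt (1 + q * A\<^sup>2)"
  interpret finite_weights ?S "spike_weight q"
    using q by (rule finite_weights_spike_weight)
  have \<sigma>: "?\<sigma> \<ge> 1" "?\<sigma>\<^sup>2 = 1 + q * A\<^sup>2"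
    using q by auto
  have scaled_le: "\<bar>spike_value A y / ?\<sigma>\<bar> \<le> \<bar>spike_value A y\<bar>" for y
  proof -
    have "\<bar>spike_value A y\<bar> / ?\<sigma> \<le> \<bar>spike_value A y\<bar> / 1"
      using \<sigma>(1) by (intro divide_left_mono) auto
    then show ?thesis
      using \<sigma>(1) by (simp add: abs_divide)
  qed
  show ?thesis
  proof (rule finite_law_in_noise_class)
    have "(\<Sum>y\<in>?S. spike_weight q y * spike_value A y) = 0"
      by (simp add: sum_spike_support spike_weight_def spike_value_def ternary_weight_def
          ternary_def rademacher_def field_simps)
    then show "(\<Sum>y\<in>?S. spike_weight q y * (spike_value A y / ?\<sigma>)) = 0"
      by (simp only: times_divide_eq_right sum_divide_distrib[symmetric])
    have second_moment: "(\<Sum>y\<in>?S. spike_weight q y * (spike_value A y)\<^sup>2) = 1 + q * A\<^sup>2"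
      by (simp add: sum_spike_support spike_weight_def spike_value_def ternary_weight_def
          ternary_def rademacher_def power2_eq_square field_simps)
    have "(\<Sum>y\<in>?S. spike_weight q y * (spike_value A y / ?\<sigma>)\<^sup>2) =
        (\<Sum>y\<in>?S. spike_weight q y * (spike_value A y)\<^sup>2) / ?\<sigma>\<^sup>2"
      by (simp only: power_divide times_divide_eq_right sum_divide_distrib[symmetric])
    also have "\<dots> = 1"
    proof -
      have "0 \<le> q * A\<^sup>2"
        using q by simp
      then show ?thesis
        using \<sigma>(2) by (simp only: second_moment) simp
    qed
    finally show "(\<Sum>y\<in>?S. spike_weight q y * (spike_value A y / ?\<sigma>)\<^sup>2) = 1" .
  next
    fix t :: real assume t: "2 \<le> t"
    let ?Z = "{y \<in> ?S. \<bar>spike_value A y / ?\<sigma>\<bar> > t}"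
    \<comment> \<open>without a spike a coordinate has modulus 1, so only spikes can exceed t\<close>
    have Z_spikes: "?Z \<subseteq> {1, 2} \<times> {0, 1}"
    proof
      fix y assume "y \<in> ?Z"
      then have y: "y \<in> ?S" "t < \<bar>spike_value A y / ?\<sigma>\<bar>"
        by auto
      have "fst y \<noteq> 0"
      proof
        assume "fst y = 0"
        then have "\<bar>spike_value A y\<bar> = 1"
          by (auto simp: spike_value_def ternary_def rademacher_def)
        then show False
          using y(2) scaled_le[of y] t by linarith
      qed
      then show "y \<in> {1, 2} \<times> {0, 1}"
        using y(1) by auto
    qed
    show "(\<Sum>y\<in>?Z. spike_weight q y) \<le> 2 * exp (- ((t / \<tau>) powr a))"
    proof (cases "?Z = {}")
      case False
      then obtain y where "y \<in> ?Z"
        by auto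
      moreover have "\<bar>spike_value A y\<bar> \<le> A + 1"
        using A by (auto simp: spike_value_def ternary_def rademacher_def)
      ultimately have "t < A + 1"
        using scaled_le[of y] by auto
      have "(\<Sum>y\<in>?Z. spike_weight q y) \<le> (\<Sum>y\<in>{1::nat, 2} \<times> {0::nat, 1}. spike_weight q y)"
        using Z_spikes q by (intro sum_mono2) (auto simp: spike_weight_def ternary_weight_def)
      also have "\<dots> = q"
        by (simp add: sum.cartesian_product[symmetric] spike_weight_def ternary_weight_def)
      finally show ?thesis
        using tail[OF t \<open>t < A + 1\<close>] by linarith
    next
      case True
      show ?thesis
        by (subst True) simp
    qed
  qed
qed

section \<open>The two regimes\<close>

lemma mult_ln_powr_le:
  fixes y b :: real
  assumes y: "0 < y" "y \<le> 1" and b: "b > 0"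
  shows "y * ln (exp 1 / y) powr b \<le> exp 1 * b powr b"
proof -
  define u where "u = ln (exp 1 / y)"
  have u: "u = 1 - ln y" "u \<ge> 1"
    using y by (auto simp: u_def ln_div)
  have "u \<le> b * exp (u / b)"
    using exp_ge_add_one_self[of "u / b"] b by (simp add: divide_simps mult.commute)
  then have "u powr b \<le> (b * exp (u / b)) powr b"
    using u b by (intro powr_mono2) auto
  also have "\<dots> = b powr b * (exp 1 / y)"
    using b y by (simp add: powr_mult exp_powr_real u_def)
  finally show ?thesis
    using y unfolding u_def by (simp add: field_simps mult_left_mono)
qed

lemma phi_exp_pos: "1 \<le> s \<Longrightarrow> s \<le> d \<Longrightarrow> phi_exp a s d > 0"
  unfolding phi_exp_def by (auto simp: less_max_iff_disj)

lemma phi_exp_le: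
  assumes a: "a > 0" and s: "1 \<le> s" "s \<le> d"
  shows "phi_exp a s d \<le> max 1 (exp 1 * (2 / a) powr (2 / a))"
proof -
  have "exp 1 * real d / real s = exp 1 / (real s / real d)"
    by simp
  then have "real s / real d * ln (exp 1 * real d / real s) powr (2 / a) \<le> exp 1 * (2 / a) powr (2 / a)"
    using s a by (simp only:) (intro mult_ln_powr_le, auto)
  moreover have "1 / sqrt (real d) \<le> 1"
    using s by (auto simp: divide_simps)
  ultimately show ?thesis
    unfolding phi_exp_def by auto
qed

definition worst_case_risk ::
    "(real \<Rightarrow> real) \<Rightarrow> real \<Rightarrow> real \<Rightarrow> real \<Rightarrow> nat \<Rightarrow> nat \<Rightarrow> ((nat \<Rightarrow> real) \<Rightarrow> real) \<Rightarrow> ennreal" where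
  "worst_case_risk ell a \<tau> c s d T = (SUP P \<in> noise_class a \<tau>. SUP \<sigma> \<in> {0<..}. SUP \<theta> \<in> sparse_vecs d s.
     risk ell a c s d T P \<sigma> \<theta>)"

lemma le_worst_case_risk:
  assumes "P \<in> noise_class a \<tau>" and "\<sigma> > 0" and "\<theta> \<in> sparse_vecs d s"
    and "x \<le> risk ell a c s d T P \<sigma> \<theta>"
  shows "x \<le> worst_case_risk ell a \<tau> c s d T"
  unfolding worst_case_risk_def using assms
  by (intro SUP_upper2[where i=P] SUP_upper2[where i=\<sigma>] SUP_upper2[where i=\<theta>]) auto

lemma zero_in_sparse_vecs: "(\<lambda>_. 0) \<in> sparse_vecs d s"
  by (simp add: sparse_vecs_def)

lemma dense_hard_instance:
  assumes ell: "ell \<in> loss_class" and x0: "0 \<le> x0" and s: "1 \<le> s" "s \<le> d"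
    and T: "T \<in> borel_measurable (PiM {..<d} (\<lambda>_. borel))"
    and k: "c / phi_exp a s d \<ge> 0" and x0_le: "x0 \<le> c / phi_exp a s d * (1 / sqrt d / 4)"
  shows "ennreal (ell x0 / 8) \<le> worst_case_risk ell a \<tau> c s d T"
proof -
  define e where "e = 1 / sqrt d"
  define k where "k = c / phi_exp a s d"
  define G where "G p u = ell (k * \<bar>T (restrict (\<lambda>i. ternary (u i)) {..<d}) / p - 1\<bar>)" for p u
  let ?U = "{..<d} \<rightarrow>\<^sub>E {0::nat, 1, 2}"
  have d: "d \<ge> 1" and e: "0 < e" "e \<le> 1"
    using s by (auto simp: e_def divide_simps)
  \<comment> \<open>\<open>\<sigma>\<xi>\<close> takes the values 0, 1, -1 for every p: both hypotheses live on one sample space\<close>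
  have hard: "ennreal (ell x0 / 8) \<le> worst_case_risk ell a \<tau> c s d T"
    if p: "1 / 2 \<le> p" "p \<le> 1" and large: "ell x0 / 8 \<le> (\<Sum>u\<in>?U. (\<Prod>i<d. ternary_weight p (u i)) * G p u)" for p
  proof (rule le_worst_case_risk[OF ternary_noise[OF p]])
    have "risk ell a c s d T (finite_law {0, 1, 2} (ternary_weight p) (\<lambda>j. ternary j / sqrt p)) (sqrt p) (\<lambda>_. 0)
        = ennreal (\<Sum>u\<in>?U. (\<Prod>i<d. ternary_weight p (u i)) *
            ell (k * \<bar>T (restrict (\<lambda>i. 0 + sqrt p * (ternary (u i) / sqrt p)) {..<d}) / (sqrt p)\<^sup>2 - 1\<bar>))"
      unfolding k_def using p
      by (intro finite_weights.risk_finite_law[OF finite_weights_ternary_weight ell k T]) auto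
    also have "\<dots> = ennreal (\<Sum>u\<in>?U. (\<Prod>i<d. ternary_weight p (u i)) * G p u)"
      using p by (simp add: G_def)
    finally show "ennreal (ell x0 / 8) \<le> risk ell a c s d T (finite_law {0, 1, 2} (ternary_weight p) (\<lambda>j. ternary j / sqrt p)) (sqrt p) (\<lambda>_. 0)"
      using large by (simp add: ennreal_leI)
  qed (use p zero_in_sparse_vecs in auto)
  have k0: "0 \<le> k"
    using k by (simp add: k_def)
  have x0_e: "x0 \<le> k * (min e 1 / 4)"
    using x0_le e(2) unfolding k_def e_def by (simp add: min_absorb1)
  have G_sum: "ell x0 \<le> G ((1 + e) / 2) u + G (1 / 2) u" for u
    unfolding G_def by (rule loss_relative_errors_ge[OF ell x0 k0 x0_e e(1)]) simp_all
  have G_nonneg: "0 \<le> G p u" for p u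
    unfolding G_def using k0 by (intro loss_class_nonneg[OF ell]) simp
  have "ell x0 / 4 \<le> (\<Sum>u\<in>?U. (\<Prod>i<d. ternary_weight ((1 + e) / 2) (u i)) * G ((1 + e) / 2) u)
      + (\<Sum>u\<in>?U. (\<Prod>i<d. ternary_weight (1 / 2) (u i)) * G (1 / 2) u)"
    unfolding e_def
    by (rule dense_two_point_bound[OF d loss_class_nonneg[OF ell x0] G_nonneg G_nonneg G_sum[unfolded e_def]])
  then consider "ell x0 / 8 \<le> (\<Sum>u\<in>?U. (\<Prod>i<d. ternary_weight ((1 + e) / 2) (u i)) * G ((1 + e) / 2) u)"
    | "ell x0 / 8 \<le> (\<Sum>u\<in>?U. (\<Prod>i<d. ternary_weight (1 / 2) (u i)) * G (1 / 2) u)"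
    by linarith
  then show ?thesis
  proof cases
    case 1
    then show ?thesis
      using e by (intro hard[of "(1 + e) / 2"]) auto
  next
    case 2
    then show ?thesis
      by (intro hard[of "1 / 2"]) auto
  qed
qed

text \<open>
  The largest spike height compatible with the tail bound at frequency \<open>s/(2d)\<close>; it is of
  order \<open>\<tau> ln\<^sup>1\<^sup>/\<^sup>a(ed/s)\<close>, and the value \<open>1/2\<close> covers the range where the tail bound
  is void.
\<close>

definition spike_height :: "real \<Rightarrow> real \<Rightarrow> nat \<Rightarrow> nat \<Rightarrow> real" where
  "spike_height a \<tau> s d =
     (let M = \<tau> * ln (exp 1 * d / s) powr (1 / a) in if M \<le> 4 then 1 / 2 else M - 1)"

context
  fixes a \<tau> :: real and s d :: nat
  assumes a: "a > 0" and \<tau>: "\<tau> > 0" and s: "1 \<le> s" "s \<le> d"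
begin

private definition u where "u = ln (exp 1 * d / s)"
private definition M where "M = \<tau> * u powr (1 / a)"

private lemma u_ge_1: "u \<ge> 1"
  using s by (simp add: u_def ln_mult ln_div)

private lemma spike_height_eq: "spike_height a \<tau> s d = (if M \<le> 4 then 1 / 2 else M - 1)"
  by (simp add: spike_height_def M_def u_def Let_def)

lemma spike_height_pos: "spike_height a \<tau> s d > 0"
  using \<tau> by (simp add: spike_height_eq M_def)

lemma spike_height_tail:
  assumes t: "2 \<le> t" "t < spike_height a \<tau> s d + 1"
  shows "real s / (2 * real d) \<le> 2 * exp (- ((t / \<tau>) powr a))"
proof -
  have "t < M"
    using t by (auto simp: spike_height_eq split: if_splits)
  then have "(t / \<tau>) powr a \<le> (u powr (1 / a)) powr a"
    using t \<tau> a by (intro powr_mono2) (auto simp: M_def divide_simps mult.commute)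
  also have "\<dots> = u"
    using u_ge_1 a by (simp add: powr_powr)
  finally have "exp (- u) \<le> exp (- ((t / \<tau>) powr a))"
    by simp
  moreover have "exp (- u) = real s / (exp 1 * real d)"
    using s by (simp add: u_def exp_minus)
  moreover have "real s / (2 * real d) \<le> 2 * (real s / (exp 1 * real d))"
    using s exp_le by (simp add: field_simps)
  ultimately show ?thesis
    by linarith
qed

lemma spike_height_variance_ge:
  "\<tau>\<^sup>2 / 128 * (real s / real d * ln (exp 1 * real d / real s) powr (2 / a))
     \<le> real s / (2 * real d) * (spike_height a \<tau> s d)\<^sup>2"
proof -
  define q where "q = real s / (2 * real d)"
  have q: "q > 0"
    using s by (simp add: q_def)
  have "M\<^sup>2 = \<tau>\<^sup>2 * u powr (2 / a)"
    using u_ge_1 by (simp add: M_def power_mult_distrib power2_eq_square powr_add[symmetric])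
  then have "\<tau>\<^sup>2 / 128 * (real s / real d * u powr (2 / a)) = q * M\<^sup>2 / 64"
    by (simp add: q_def field_simps)
  also have "\<dots> \<le> q * (spike_height a \<tau> s d)\<^sup>2"
  proof (cases "M \<le> 4")
    case True
    then have "M\<^sup>2 \<le> 4\<^sup>2"
      using \<tau> by (intro power_mono) (auto simp: M_def)
    then show ?thesis
      using True q by (simp add: spike_height_eq power2_eq_square)
  next
    case False
    then have "(3 / 4 * M)\<^sup>2 \<le> (spike_height a \<tau> s d)\<^sup>2"
      by (intro power_mono) (auto simp: spike_height_eq)
    moreover have "(3 / 4 * M)\<^sup>2 = 9 / 16 * M\<^sup>2"
      by (simp add: power2_eq_square)
    ultimately have "M\<^sup>2 / 64 \<le> (spike_height a \<tau> s d)\<^sup>2"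
      using zero_le_power2[of M] by linarith
    from mult_left_mono[OF this less_imp_le[OF q]] show ?thesis
      by simp
  qed
  finally show ?thesis
    by (simp add: q_def u_def)
qed

end

definition spike_obs :: "nat \<Rightarrow> real \<Rightarrow> (nat \<Rightarrow> nat) \<Rightarrow> (nat \<Rightarrow> nat) \<Rightarrow> nat \<Rightarrow> real" where
  "spike_obs d A \<alpha> \<beta> = restrict (\<lambda>i. spike_value A (\<alpha> i, \<beta> i)) {..<d}"

lemma risk_spike_null:
  assumes ell: "ell \<in> loss_class" and k: "c / phi_exp a s d \<ge> 0"
    and T: "T \<in> borel_measurable (PiM {..<d} (\<lambda>_. borel))"
    and q: "0 \<le> q" "q \<le> 1" and \<sigma>: "\<sigma> > 0"
  shows "risk ell a c s d T (finite_law ({0, 1, 2} \<times> {0, 1}) (spike_weight q) (\<lambda>y. spike_value A y / \<sigma>)) \<sigma> (\<lambda>_. 0)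
    = ennreal (\<Sum>\<alpha>\<in>{..<d} \<rightarrow>\<^sub>E {0::nat, 1, 2}. \<Sum>\<beta>\<in>{..<d} \<rightarrow>\<^sub>E {0::nat, 1}.
        (\<Prod>i<d. ternary_weight q (\<alpha> i)) * (\<Prod>i<d. 1 / 2) *
        ell (c / phi_exp a s d * \<bar>T (spike_obs d A \<alpha> \<beta>) / \<sigma>\<^sup>2 - 1\<bar>))"
proof -
  let ?L = "\<lambda>y. ell (c / phi_exp a s d * \<bar>T y / \<sigma>\<^sup>2 - 1\<bar>)"
  have "risk ell a c s d T (finite_law ({0, 1, 2} \<times> {0, 1}) (spike_weight q) (\<lambda>y. spike_value A y / \<sigma>)) \<sigma> (\<lambda>_. 0)
      = ennreal (\<Sum>u\<in>{..<d} \<rightarrow>\<^sub>E {0::nat, 1, 2} \<times> {0::nat, 1}. (\<Prod>i<d. spike_weight q (u i)) *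
          ?L (restrict (\<lambda>i. 0 + \<sigma> * (spike_value A (u i) / \<sigma>)) {..<d}))"
    using q by (intro finite_weights.risk_finite_law[OF finite_weights_spike_weight ell k T]) auto
  also have "\<dots> = ennreal (\<Sum>\<alpha>\<in>{..<d} \<rightarrow>\<^sub>E {0::nat, 1, 2}. \<Sum>\<beta>\<in>{..<d} \<rightarrow>\<^sub>E {0::nat, 1}.
      (\<Prod>i<d. ternary_weight q (\<alpha> i)) * (\<Prod>i<d. 1 / 2) * ?L (spike_obs d A \<alpha> \<beta>))"
    unfolding sum_PiE_Times
  proof (intro arg_cong[where f = ennreal] sum.cong refl)
    fix \<alpha> \<beta> :: "nat \<Rightarrow> nat"
    have "(\<Prod>i<d. spike_weight q (restrict (\<lambda>i. (\<alpha> i, \<beta> i)) {..<d} i)) = (\<Prod>i<d. ternary_weight q (\<alpha> i) * (1 / 2))"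
      by (intro prod.cong) (auto simp: spike_weight_def)
    also have "\<dots> = (\<Prod>i<d. ternary_weight q (\<alpha> i)) * (\<Prod>i<d. 1 / 2)"
      by (rule prod.distrib)
    moreover have "restrict (\<lambda>i. 0 + \<sigma> * (spike_value A (restrict (\<lambda>i. (\<alpha> i, \<beta> i)) {..<d} i) / \<sigma>)) {..<d}
        = spike_obs d A \<alpha> \<beta>"
      using \<sigma> by (auto simp: spike_obs_def fun_eq_iff)
    ultimately show "(\<Prod>i<d. spike_weight q (restrict (\<lambda>i. (\<alpha> i, \<beta> i)) {..<d} i)) *
        ?L (restrict (\<lambda>i. 0 + \<sigma> * (spike_value A (restrict (\<lambda>i. (\<alpha> i, \<beta> i)) {..<d} i) / \<sigma>)) {..<d})
      = (\<Prod>i<d. ternary_weight q (\<alpha> i)) * (\<Prod>i<d. 1 / 2) * ?L (spike_obs d A \<alpha> \<beta>)"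
      by simp
  qed
  finally show ?thesis .
qed

lemma risk_spike_alternative:
  assumes ell: "ell \<in> loss_class" and k: "c / phi_exp a s d \<ge> 0"
    and T: "T \<in> borel_measurable (PiM {..<d} (\<lambda>_. borel))"
  shows "risk ell a c s d T (finite_law {0, 1} (\<lambda>_. 1 / 2) rademacher) 1 (restrict (\<lambda>i. A * ternary (\<alpha> i)) {..<d})
    = ennreal (\<Sum>\<beta>\<in>{..<d} \<rightarrow>\<^sub>E {0::nat, 1}. (\<Prod>i<d. 1 / 2) *
        ell (c / phi_exp a s d * \<bar>T (spike_obs d A \<alpha> \<beta>) / 1\<^sup>2 - 1\<bar>))"
proof -
  have "restrict (\<lambda>i. restrict (\<lambda>i. A * ternary (\<alpha> i)) {..<d} i + 1 * rademacher (\<beta> i)) {..<d}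
      = spike_obs d A \<alpha> \<beta>" for \<beta>
    by (auto simp: spike_obs_def spike_value_def fun_eq_iff)
  then show ?thesis
    by (simp only: finite_weights.risk_finite_law[OF finite_weights_uniform_pair ell k T])
qed

lemma sparse_hard_instance:
  assumes ell: "ell \<in> loss_class" and x0: "0 \<le> x0" and a: "a > 0" and \<tau>: "\<tau> > 0"
    and s: "1 \<le> s" "s \<le> d" and T: "T \<in> borel_measurable (PiM {..<d} (\<lambda>_. borel))"
    and k: "c / phi_exp a s d \<ge> 0"
    and x0_le: "x0 \<le> c / phi_exp a s d *
      (min (\<tau>\<^sup>2 / 128 * (real s / real d * ln (exp 1 * real d / real s) powr (2 / a))) 1 / 4)"
  shows "ennreal (ell x0 / 8) \<le> worst_case_risk ell a \<tau> c s d T"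
proof -
  define q :: real where "q = s / (2 * d)"
  define A where "A = spike_height a \<tau> s d"
  define \<sigma> where "\<sigma> = sqrt (1 + q * A\<^sup>2)"
  define k where "k = c / phi_exp a s d"
  define G where "G v \<alpha> \<beta> = ell (k * \<bar>T (spike_obs d A \<alpha> \<beta>) / v\<^sup>2 - 1\<bar>)" for v \<alpha> \<beta>
  define wA where "wA \<alpha> = (\<Prod>i<d. ternary_weight q (\<alpha> i))" for \<alpha> :: "nat \<Rightarrow> nat"
  define wB where "wB (\<beta> :: nat \<Rightarrow> nat) = (\<Prod>i<d. 1 / 2 :: real)" for \<beta>
  define N where "N = {\<alpha>\<in>{..<d} \<rightarrow>\<^sub>E {0::nat, 1, 2}. s < card {i\<in>{..<d}. \<alpha> i \<noteq> 0}}"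
  let ?U = "{..<d} \<rightarrow>\<^sub>E {0::nat, 1, 2}" and ?V = "{..<d} \<rightarrow>\<^sub>E {0::nat, 1}"
  have q: "0 < q" "q \<le> 1"
    using s by (auto simp: q_def divide_simps)
  have A: "A > 0"
    unfolding A_def using a \<tau> s by (rule spike_height_pos)
  have \<sigma>: "\<sigma> > 0" "\<sigma>\<^sup>2 = (1 + q * A\<^sup>2) * 1\<^sup>2"
    using q by (auto simp: \<sigma>_def add_pos_nonneg)
  have k0: "0 \<le> k"
    using k by (simp add: k_def)
  have "min (\<tau>\<^sup>2 / 128 * (real s / real d * ln (exp 1 * real d / real s) powr (2 / a))) 1 / 4
      \<le> min (q * A\<^sup>2) 1 / 4"
    using spike_height_variance_ge[OF a \<tau> s] unfolding q_def A_def by (auto simp: min_def)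
  from mult_left_mono[OF this k0] have "x0 \<le> k * (min (q * A\<^sup>2) 1 / 4)"
    using x0_le unfolding k_def by linarith
  then have G_sum: "ell x0 \<le> G \<sigma> \<alpha> \<beta> + G 1 \<alpha> \<beta>" for \<alpha> \<beta>
    unfolding G_def using q A
    by (intro loss_relative_errors_ge[OF ell x0 k0 _ _ _ \<sigma>(2)]) auto
  have G_nonneg: "0 \<le> G v \<alpha> \<beta>" for v \<alpha> \<beta>
    unfolding G_def using k0 by (intro loss_class_nonneg[OF ell]) simp
  have risk_null: "ennreal (\<Sum>\<alpha>\<in>?U. \<Sum>\<beta>\<in>?V. wA \<alpha> * wB \<beta> * G \<sigma> \<alpha> \<beta>) = risk ell a c s d T
      (finite_law ({0, 1, 2} \<times> {0, 1}) (spike_weight q) (\<lambda>y. spike_value A y / \<sigma>)) \<sigma> (\<lambda>_. 0)"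
    unfolding risk_spike_null[OF ell k T less_imp_le[OF q(1)] q(2) \<sigma>(1)]
      wA_def wB_def G_def k_def
    by simp
  \<comment> \<open>the alternatives: theta carries the spikes and the noise is Rademacher; their mixture is the null\<close>
  have risk_alternative: "ennreal (\<Sum>\<beta>\<in>?V. wB \<beta> * G 1 \<alpha> \<beta>) =
      risk ell a c s d T (finite_law {0, 1} (\<lambda>_. 1 / 2) rademacher) 1 (restrict (\<lambda>i. A * ternary (\<alpha> i)) {..<d})"
    for \<alpha>
    unfolding risk_spike_alternative[OF ell k T] wB_def G_def k_def ..
  have sparse: "restrict (\<lambda>i. A * ternary (\<alpha> i)) {..<d} \<in> sparse_vecs d s" if "\<alpha> \<in> ?U - N" for \<alpha>
  proof -
    have "{i\<in>{..<d}. restrict (\<lambda>i. A * ternary (\<alpha> i)) {..<d} i \<noteq> 0} = {i\<in>{..<d}. \<alpha> i \<noteq> 0}"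
      using A by (auto simp: ternary_def)
    then show ?thesis
      using that by (simp add: sparse_vecs_def N_def not_less)
  qed
  have "sum wA N \<le> 1 / 2"
    unfolding N_def wA_def q_def using s by (rule ternary_weight_many_nonzero_le)
  moreover have "sum wA ?U = 1"
    unfolding wA_def by (rule sum_prod_PiE_eq_1) (auto simp: ternary_weight_def)
  moreover have "sum wB ?V = 1"
    unfolding wB_def by (rule sum_prod_PiE_eq_1[where w = "\<lambda>_. 1 / 2"]) auto
  moreover have "wA \<alpha> \<ge> 0" for \<alpha>
    unfolding wA_def using q by (intro prod_nonneg) (auto simp: ternary_weight_def)
  ultimately have "ell x0 / 4 \<le> (\<Sum>\<alpha>\<in>?U. \<Sum>\<beta>\<in>?V. wA \<alpha> * wB \<beta> * G \<sigma> \<alpha> \<beta>)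
      \<or> (\<exists>\<alpha>\<in>?U - N. ell x0 / 4 \<le> (\<Sum>\<beta>\<in>?V. wB \<beta> * G 1 \<alpha> \<beta>))"
    using G_nonneg G_sum
    by (intro mixture_two_point_bound finite_PiE) (auto simp: N_def wB_def)
  then show ?thesis
  proof (elim disjE bexE)
    assume "ell x0 / 4 \<le> (\<Sum>\<alpha>\<in>?U. \<Sum>\<beta>\<in>?V. wA \<alpha> * wB \<beta> * G \<sigma> \<alpha> \<beta>)"
    then have "ennreal (ell x0 / 8) \<le> risk ell a c s d T
        (finite_law ({0, 1, 2} \<times> {0, 1}) (spike_weight q) (\<lambda>y. spike_value A y / \<sigma>)) \<sigma> (\<lambda>_. 0)"
      unfolding risk_null[symmetric] using loss_class_nonneg[OF ell x0] by (intro ennreal_leI) linarith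
    moreover have "finite_law ({0, 1, 2} \<times> {0, 1}) (spike_weight q) (\<lambda>y. spike_value A y / \<sigma>) \<in> noise_class a \<tau>"
      unfolding \<sigma>_def using q A spike_height_tail[OF a \<tau> s]
      by (intro spike_noise) (auto simp: A_def q_def)
    ultimately show ?thesis
      using \<sigma>(1) zero_in_sparse_vecs by (intro le_worst_case_risk) auto
  next
    fix \<alpha> assume "\<alpha> \<in> ?U - N" and "ell x0 / 4 \<le> (\<Sum>\<beta>\<in>?V. wB \<beta> * G 1 \<alpha> \<beta>)"
    moreover from this have "ennreal (ell x0 / 8) \<le> risk ell a c s d T
        (finite_law {0, 1} (\<lambda>_. 1 / 2) rademacher) 1 (restrict (\<lambda>i. A * ternary (\<alpha> i)) {..<d})"
      unfolding risk_alternative[symmetric] using loss_class_nonneg[OF ell x0] by (intro ennreal_leI) linarith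
    ultimately show ?thesis
      using rademacher_noise sparse by (intro le_worst_case_risk) auto
  qed
qed

lemma hard_instance:
  assumes ell: "ell \<in> loss_class" and x0: "0 \<le> x0" and a: "a > 0" and \<tau>: "\<tau> > 0"
    and s: "1 \<le> s" "s \<le> d" and T: "T \<in> borel_measurable (PiM {..<d} (\<lambda>_. borel))" and c: "c \<ge> 0"
    and x0_le: "x0 \<le> c / phi_exp a s d * (min (min 1 (\<tau>\<^sup>2 / 128) * phi_exp a s d) 1 / 4)"
  shows "ennreal (ell x0 / 8) \<le> worst_case_risk ell a \<tau> c s d T"
proof -
  define \<phi>\<^sub>s where "\<phi>\<^sub>s = real s / real d * ln (exp 1 * real d / real s) powr (2 / a)"
  have k: "c / phi_exp a s d \<ge> 0"
    using c phi_exp_pos[OF s, of a] by (rule divide_nonneg_pos)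
  have scale_mono: "x0 \<le> c / phi_exp a s d * z" if "min (min 1 (\<tau>\<^sup>2 / 128) * phi_exp a s d) 1 / 4 \<le> z" for z
    using x0_le mult_left_mono[OF that k] by linarith
  show ?thesis
  proof (cases "\<phi>\<^sub>s \<le> 1 / sqrt d")
    case True
    then have "phi_exp a s d = 1 / sqrt d"
      by (simp add: phi_exp_def \<phi>\<^sub>s_def)
    moreover have "min (min 1 (\<tau>\<^sup>2 / 128) * (1 / sqrt d)) 1 \<le> 1 / sqrt d"
      by (intro min.coboundedI1 mult_left_le_one_le) auto
    ultimately show ?thesis
      by (intro dense_hard_instance[OF ell x0 s T k] scale_mono) simp
  next
    case False
    then have "phi_exp a s d = \<phi>\<^sub>s"
      by (simp add: phi_exp_def \<phi>\<^sub>s_def)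
    moreover have "min (min 1 (\<tau>\<^sup>2 / 128) * \<phi>\<^sub>s) 1 \<le> min (\<tau>\<^sup>2 / 128 * \<phi>\<^sub>s) 1"
    proof -
      have "0 < 1 / sqrt d"
        using s by simp
      then have "0 \<le> \<phi>\<^sub>s"
        using False by linarith
      then show ?thesis
        by (intro min.mono mult_right_mono) auto
    qed
    ultimately show ?thesis
      by (intro sparse_hard_instance[OF ell x0 a \<tau> s T k] scale_mono) (simp add: \<phi>\<^sub>s_def)
  qed
qed

lemma scaled_threshold_le:
  fixes x0 m C \<phi> :: real
  assumes "0 \<le> x0" "0 < m" "0 < \<phi>" "\<phi> \<le> C"
  shows "x0 \<le> 4 * x0 * max (1 / m) C / \<phi> * (min (m * \<phi>) 1 / 4)"
proof (cases "m * \<phi> \<le> 1")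
  case True
  have "x0 = x0 * (1 / m) * m"
    using assms by simp
  also have "\<dots> \<le> x0 * max (1 / m) C * m"
    using assms by (intro mult_right_mono mult_left_mono) auto
  finally show ?thesis
    using True assms by (simp add: min_def)
next
  case False
  have "1 \<le> C / \<phi>"
    using assms by simp
  then have "x0 * 1 \<le> x0 * (C / \<phi>)"
    using assms(1) by (rule mult_left_mono)
  then have "x0 \<le> x0 * (C / \<phi>)"
    by simp
  also have "\<dots> \<le> x0 * (max (1 / m) C / \<phi>)"
    using assms by (intro mult_left_mono divide_right_mono) auto
  finally show ?thesis
    using False assms by (simp add: min_def)
qed

theorem theorem5:
  fixes \<tau> a :: real and ell :: "real \<Rightarrow> real"
  assumes "\<tau> > 0" and "a > 0" and "ell \<in> loss_class"
  shows "\<exists>c c'. c > 0 \<and> c' > 0 \<and>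
    (\<forall>s d :: nat. 1 \<le> s \<and> s \<le> d \<longrightarrow>
      (\<forall>T \<in> borel_measurable (PiM {..<d} (\<lambda>_. borel)).
         ennreal c' \<le> (SUP P \<in> noise_class a \<tau>. SUP \<sigma> \<in> {0<..}. SUP \<theta> \<in> sparse_vecs d s.
                          risk ell a c s d T P \<sigma> \<theta>)))"
proof -
  obtain x0 where x0: "x0 > 0" "ell x0 > 0"
    using loss_class_positive_point[OF assms(3)] by blast
  define m where "m = min 1 (\<tau>\<^sup>2 / 128)"
  define C where "C = max 1 (exp 1 * (2 / a) powr (2 / a))"
  define c where "c = 4 * x0 * max (1 / m) C"
  have m: "m > 0"
    using assms(1) by (simp add: m_def)
  have c: "c > 0"
    using x0 m by (simp add: c_def less_max_iff_disj)
  have "ennreal (ell x0 / 8) \<le> worst_case_risk ell a \<tau> c s d T"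
    if s: "1 \<le> s" "s \<le> d" and T: "T \<in> borel_measurable (PiM {..<d} (\<lambda>_. borel))" for s d T
  proof (rule hard_instance[OF assms(3) _ assms(2,1) s T])
    show "x0 \<le> c / phi_exp a s d * (min (min 1 (\<tau>\<^sup>2 / 128) * phi_exp a s d) 1 / 4)"
      unfolding c_def m_def[symmetric] using x0 m phi_exp_pos[OF s] phi_exp_le[OF assms(2) s]
      by (intro scaled_threshold_le) (auto simp: C_def)
  qed (use x0 c in auto)
  moreover have "ell x0 / 8 > 0"
    using x0 by simp
  ultimately show ?thesis
    using c unfolding worst_case_risk_def by blast
qed

end
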